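(* Let $\mathbf X=(X,\mu,T)$ be a nontrivial rigid-recurrence system. Then for every measurable $D\subseteq X$ with $D\cap TD=\varnothing$ and every $c>0$, the set $R_c(D)=\{n\in\mathbb Z:\mu(D\cap T^nD)>c\}$ does not contain any set of the form $n_0+B-B$ with $n_0\in\mathbb Z$, $B\subseteq\mathbb Z$ and $d^*(B)>0$.
   Context: A measure preserving system is a probability space $(X,\mu)$ with an invertible measure preserving map $T$. $S\subseteq\mathbb Z$ is a set of recurrence if for every measure preserving system $(Y,\nu,R)$ and every measurable $E$ with $\nu(E)>0$ there is $n\in S$ with $\nu(E\cap R^nE)>0$. $S$ is a set of rigidity for $\mathbf X$ if $S$ is infinite and for all measurable $D\subseteq X$ and $\varepsilon>0$, $\{n\in S:\mu(D\triangle T^nD)>\varepsilon\}$ is finite. $\mathbf X$ is a rigid-recurrence system if there is a set of rigidity $S$ for $\mathbf X$ such that $S+n$ is a set of recurrence for every $n\in\mathbb Z$. $B-B=\{a-b:a,b\in B\}$, and $d^*(B)=\lim_{N\to\infty}\sup_{M\in\mathbb Z}\frac{|B\cap[M,M+N-1]|}{N}$ is the upper Banach density. *)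

theory Defs
  imports "HOL-Probability.Probability"
begin

definition mps :: "'a measure \<Rightarrow> ('a \<Rightarrow> 'a) \<Rightarrow> bool" where
  "mps M T \<longleftrightarrow> prob_space M \<and> bij_betw T (space M) (space M)
     \<and> T \<in> M \<rightarrow>\<^sub>M M \<and> the_inv_into (space M) T \<in> M \<rightarrow>\<^sub>M M
     \<and> (\<forall>A\<in>sets M. measure M (T -` A \<inter> space M) = measure M A)"

definition tpow :: "'a measure \<Rightarrow> ('a \<Rightarrow> 'a) \<Rightarrow> int \<Rightarrow> 'a \<Rightarrow> 'a" where
  "tpow M T n = (if n \<ge> 0 then T ^^ nat n else (the_inv_into (space M) T) ^^ nat (- n))"

definition set_of_recurrence :: "int set \<Rightarrow> bool" where
  "set_of_recurrence S \<longleftrightarrow>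
     (\<forall>(N::real measure) R. mps N R \<longrightarrow>
        (\<forall>E\<in>sets N. measure N E > 0 \<longrightarrow>
           (\<exists>n\<in>S. measure N (E \<inter> tpow N R n ` E) > 0)))"

definition set_of_rigidity :: "'a measure \<Rightarrow> ('a \<Rightarrow> 'a) \<Rightarrow> int set \<Rightarrow> bool" where
  "set_of_rigidity M T S \<longleftrightarrow> infinite S \<and>
     (\<forall>D\<in>sets M. \<forall>\<epsilon>>0. finite {n\<in>S. measure M (sym_diff D (tpow M T n ` D)) > \<epsilon>})"

definition rigid_recurrence :: "'a measure \<Rightarrow> ('a \<Rightarrow> 'a) \<Rightarrow> bool" where
  "rigid_recurrence M T \<longleftrightarrow> mps M T \<and>
     (\<exists>S. set_of_rigidity M T S \<and> (\<forall>n::int. set_of_recurrence ((\<lambda>s. s + n) ` S)))"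

definition nontrivial_system :: "'a measure \<Rightarrow> bool" where
  "nontrivial_system M \<longleftrightarrow> (\<exists>A\<in>sets M. 0 < measure M A \<and> measure M A < 1)"

definition upper_banach_density :: "int set \<Rightarrow> real" where
  "upper_banach_density B =
     lim (\<lambda>N::nat. SUP M::int. real (card (B \<inter> {M..M + int N - 1})) / real N)"

definition return_set :: "'a measure \<Rightarrow> ('a \<Rightarrow> 'a) \<Rightarrow> 'a set \<Rightarrow> real \<Rightarrow> int set" where
  "return_set M T D c = {n. measure M (D \<inter> tpow M T n ` D) > c}"

end

theory Submission
  imports Defs "HOL-Library.Nat_Bijection" "HOL-Library.Diagonal_Subsequence"
begin

text \<open>Suppose \<open>n\<^sub>0 + B - B \<subseteq> R\<^sub>c(D)\<close>. From the rigidity set \<open>S\<close> discard the finitely many \<open>s\<close>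
  with \<open>\<mu>(D \<triangle> T\<^sup>s D) > c/3\<close>. For the remaining \<open>s, s'\<close> the set \<open>D \<inter> T\<^sup>s\<^sup>-\<^sup>s\<^sup>'\<^sup>+\<^sup>1 D\<close> is
  close to \<open>D \<inter> T D = {}\<close>, so \<open>s - s' + 1 \<notin> R\<^sub>c(D)\<close>; in particular \<open>s - s' + 1 \<noteq> n\<^sub>0\<close>, which
  forces some \<open>s'\<close> with \<open>t = s' + n\<^sub>0 - 1 \<notin> S\<close>. The translate \<open>S - t\<close> is a set of recurrence,
  so by the Furstenberg correspondence principle it meets \<open>B' - B'\<close> for a residue class \<open>B'\<close>
  of \<open>B\<close> of positive density modulo a large \<open>L\<close>. The modulus excludes the discarded elements
  and \<open>t \<notin> S\<close> excludes \<open>0\<close>, so \<open>s - t = a - b\<close> with \<open>s\<close> kept, i.e.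
  \<open>s - s' + 1 = n\<^sub>0 + a - b \<in> R\<^sub>c(D)\<close>: a contradiction.\<close>

section \<open>Measure preserving systems\<close>

lemma tpow_0 [simp]: "tpow M T 0 x = x"
  by (simp add: tpow_def)

locale mp_system =
  fixes M :: "'a measure" and T :: "'a \<Rightarrow> 'a"
  assumes mps: "mps M T"
begin

abbreviation Tinv :: "'a \<Rightarrow> 'a" where "Tinv \<equiv> the_inv_into (space M) T"

sublocale prob_space M
  using mps by (simp add: mps_def)

lemma bij_T: "bij_betw T (space M) (space M)"
  and T_measurable: "T \<in> M \<rightarrow>\<^sub>M M"
  and Tinv_measurable: "Tinv \<in> M \<rightarrow>\<^sub>M M"
  and measure_T_vimage: "A \<in> sets M \<Longrightarrow> measure M (T -` A \<inter> space M) = measure M A"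
  using mps by (simp_all add: mps_def)

lemma inj_T: "inj_on T (space M)"
  using bij_T by (simp add: bij_betw_def)

lemma T_in_space: "x \<in> space M \<Longrightarrow> T x \<in> space M"
  and Tinv_in_space: "x \<in> space M \<Longrightarrow> Tinv x \<in> space M"
  and T_Tinv: "x \<in> space M \<Longrightarrow> T (Tinv x) = x"
  and Tinv_T: "x \<in> space M \<Longrightarrow> Tinv (T x) = x"
  using bij_T bij_betw_the_inv_into[OF bij_T] f_the_inv_into_f_bij_betw[OF bij_T] the_inv_into_f_f[OF inj_T]
  by (auto simp: bij_betw_def)

lemma tpow_in_space: "x \<in> space M \<Longrightarrow> tpow M T n x \<in> space M"
proof -
  assume x: "x \<in> space M"
  have "(T ^^ k) x \<in> space M" "(Tinv ^^ k) x \<in> space M" for k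
    by (induction k) (auto simp: x T_in_space Tinv_in_space)
  then show ?thesis by (simp add: tpow_def)
qed

lemma tpow_succ: "x \<in> space M \<Longrightarrow> tpow M T (n + 1) x = T (tpow M T n x)"
proof -
  assume x: "x \<in> space M"
  have Tinv_pow: "(Tinv ^^ k) x \<in> space M" for k
    by (induction k) (auto simp: x Tinv_in_space)
  consider "n \<ge> 0" | "n = -1" | "n < -1" by linarith
  then show ?thesis
  proof cases
    case 1
    then have "nat (n + 1) = Suc (nat n)" by simp
    with 1 show ?thesis by (simp add: tpow_def)
  next
    case 2
    with x show ?thesis by (simp add: tpow_def T_Tinv)
  next
    case 3
    then have "nat (- n) = Suc (nat (- (n + 1)))" by simp
    with 3 show ?thesis by (simp add: tpow_def T_Tinv Tinv_pow)
  qed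
qed

lemma tpow_pred: "x \<in> space M \<Longrightarrow> tpow M T (n - 1) x = Tinv (tpow M T n x)"
  using tpow_succ[of x "n - 1"] by (simp add: Tinv_T tpow_in_space)

lemma tpow_add: "x \<in> space M \<Longrightarrow> tpow M T (m + n) x = tpow M T m (tpow M T n x)"
proof (induction m rule: int_induct[where k = 0])
  case (step1 i)
  have "tpow M T (i + 1 + n) x = T (tpow M T (i + n) x)"
    using step1 tpow_succ[of x "i + n"] by (simp add: ac_simps)
  with step1 show ?case by (simp add: tpow_succ tpow_in_space)
next
  case (step2 i)
  have "tpow M T (i - 1 + n) x = Tinv (tpow M T (i + n) x)"
    using step2 tpow_pred[of x "i + n"] by (simp add: algebra_simps)
  with step2 show ?case by (simp add: tpow_pred tpow_in_space)
qed simp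

lemma inj_on_tpow: "inj_on (tpow M T n) (space M)"
  by (rule inj_on_inverseI[where g = "tpow M T (- n)"]) (simp flip: tpow_add)

lemma tpow_image_subset: "A \<subseteq> space M \<Longrightarrow> tpow M T n ` A \<subseteq> space M"
  using tpow_in_space by auto

lemma tpow_image_tpow: "A \<subseteq> space M \<Longrightarrow> tpow M T m ` tpow M T n ` A = tpow M T (m + n) ` A"
  by (auto simp: image_image subset_iff tpow_add intro!: image_cong)

lemma T_image: assumes A: "A \<in> sets M" shows "T ` A \<in> sets M" "measure M (T ` A) = measure M A"
proof -
  have A_sp: "A \<subseteq> space M" using sets.sets_into_space A by auto
  have "T ` A = Tinv -` A \<inter> space M"
    using A_sp by (auto simp: Tinv_T T_in_space) (metis T_Tinv image_eqI)
  then show TA: "T ` A \<in> sets M" using measurable_sets[OF Tinv_measurable A] by simp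
  have "T -` (T ` A) \<inter> space M = A" using A_sp inj_T by (auto simp: inj_on_def T_in_space)
  then show "measure M (T ` A) = measure M A" using measure_T_vimage[OF TA] by simp
qed

lemma Tinv_image: assumes A: "A \<in> sets M" shows "Tinv ` A \<in> sets M" "measure M (Tinv ` A) = measure M A"
proof -
  have A_sp: "A \<subseteq> space M" using sets.sets_into_space A by auto
  have eq: "Tinv ` A = T -` A \<inter> space M"
    using A_sp by (auto simp: T_Tinv Tinv_in_space) (metis Tinv_T image_eqI)
  show "Tinv ` A \<in> sets M" unfolding eq using measurable_sets[OF T_measurable A] .
  show "measure M (Tinv ` A) = measure M A" unfolding eq by (rule measure_T_vimage[OF A])
qed

lemma tpow_image: assumes A: "A \<in> sets M"
  shows "tpow M T n ` A \<in> sets M \<and> measure M (tpow M T n ` A) = measure M A"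
proof (induction n rule: int_induct[where k = 0])
  case base
  then show ?case using A by simp
next
  case (step1 i)
  have "tpow M T (i + 1) ` A = T ` tpow M T i ` A"
    using sets.sets_into_space[OF A] by (force simp: tpow_succ image_image intro!: image_cong)
  then show ?case using step1 T_image[of "tpow M T i ` A"] by simp
next
  case (step2 i)
  have "tpow M T (i - 1) ` A = Tinv ` tpow M T i ` A"
    using sets.sets_into_space[OF A] by (force simp: tpow_pred image_image intro!: image_cong)
  then show ?case using step2 Tinv_image[of "tpow M T i ` A"] by simp
qed

text \<open>Applying \<open>T\<^sup>s\<^sup>'\<close> turns \<open>D \<inter> T\<^sup>s\<^sup>-\<^sup>s\<^sup>'\<^sup>+\<^sup>1 D\<close> into \<open>T\<^sup>s\<^sup>' D \<inter> T (T\<^sup>s D)\<close>,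
  which differs from \<open>D \<inter> T D = {}\<close> by at most \<open>2\<epsilon>\<close>.\<close>
lemma measure_Int_tpow_diff_le:
  assumes D: "D \<in> sets M" and disj: "D \<inter> T ` D = {}"
    and s: "measure M (sym_diff D (tpow M T s ` D)) \<le> \<epsilon>"
    and s': "measure M (sym_diff D (tpow M T s' ` D)) \<le> \<epsilon>"
  shows "measure M (D \<inter> tpow M T (s - s' + 1) ` D) \<le> 2 * \<epsilon>"
proof -
  have D_sp: "D \<subseteq> space M" using sets.sets_into_space D by auto
  define X where "X = tpow M T s' ` D"
  define Z where "Z = tpow M T s ` D"
  have X: "X \<in> sets M" and Z: "Z \<in> sets M"
    using tpow_image[OF D] by (auto simp: X_def Z_def)
  have TD: "T ` D \<in> sets M" and TZ: "T ` Z \<in> sets M"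
    using T_image(1) D Z by auto
  have "tpow M T s' ` (D \<inter> tpow M T (s - s' + 1) ` D) = X \<inter> tpow M T s' ` tpow M T (s - s' + 1) ` D"
    unfolding X_def by (rule inj_on_image_Int[OF inj_on_tpow D_sp tpow_image_subset[OF D_sp]])
  also have "tpow M T s' ` tpow M T (s - s' + 1) ` D = tpow M T (s + 1) ` D"
    using tpow_image_tpow[OF D_sp] by simp
  also have "\<dots> = T ` Z"
    using D_sp by (force simp: Z_def image_image tpow_succ intro!: image_cong)
  finally have "measure M (D \<inter> tpow M T (s - s' + 1) ` D) = measure M (X \<inter> T ` Z)"
    using tpow_image[of "D \<inter> tpow M T (s - s' + 1) ` D" s'] D tpow_image[OF D] by (metis sets.Int)
  also have "\<dots> \<le> measure M ((X - D) \<union> (T ` Z - T ` D))"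
    using disj X TZ D TD by (intro finite_measure_mono) auto
  also have "\<dots> \<le> measure M (X - D) + measure M (T ` Z - T ` D)"
    using X TZ D TD by (intro measure_Un_le) auto
  also have "T ` Z - T ` D = T ` (Z - D)"
    using D_sp tpow_image_subset[OF D_sp] by (intro inj_on_image_set_diff[OF inj_T, symmetric]) (auto simp: Z_def)
  also have "measure M (T ` (Z - D)) = measure M (Z - D)"
    using T_image Z D by blast
  also have "measure M (X - D) + measure M (Z - D) \<le> 2 * \<epsilon>"
    using finite_measure_mono[of "X - D" "sym_diff D X"] finite_measure_mono[of "Z - D" "sym_diff D Z"]
      s s' X Z D by (auto simp: X_def Z_def)
  finally show ?thesis .
qed

lemma rigidity_set_differences_avoid_return_set:
  assumes D: "D \<in> sets M" and disj: "D \<inter> T ` D = {}" and rigid: "set_of_rigidity M T S" and "c > 0"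
  shows "\<exists>F. finite F \<and> (\<forall>s\<in>S - F. \<forall>s'\<in>S - F. s - s' + 1 \<notin> return_set M T D c)"
proof (intro exI conjI ballI)
  define F where "F = {n\<in>S. measure M (sym_diff D (tpow M T n ` D)) > c / 3}"
  have "c / 3 > 0" using \<open>c > 0\<close> by simp
  with rigid D show "finite F"
    unfolding set_of_rigidity_def F_def by blast
  fix s s' assume "s \<in> S - F" "s' \<in> S - F"
  then have "measure M (D \<inter> tpow M T (s - s' + 1) ` D) \<le> 2 * (c / 3)"
    by (intro measure_Int_tpow_diff_le[OF D disj]) (auto simp: F_def)
  with \<open>c > 0\<close> show "s - s' + 1 \<notin> return_set M T D c"
    by (simp add: return_set_def)
qed

end

section \<open>Upper Banach density\<close>

definition dense_on_long_intervals :: "int set \<Rightarrow> real \<Rightarrow> bool" where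
  "dense_on_long_intervals C \<delta> \<longleftrightarrow>
     (\<forall>K. \<exists>a N. N \<ge> K \<and> real (card (C \<inter> {a..a + int N - 1})) \<ge> \<delta> * real N)"

text \<open>The limit in \<^const>\<open>upper_banach_density\<close> need not exist a priori; if no positive
  density is attained on long intervals, the densities tend to \<open>0\<close>, so the limit is \<open>0\<close>.\<close>
lemma upper_banach_density_pos_imp_dense:
  assumes "upper_banach_density B > 0"
  shows "\<exists>\<delta>>0. dense_on_long_intervals B \<delta>"
proof (rule ccontr)
  assume not_dense: "\<not> ?thesis"
  define X where "X = (\<lambda>N::nat. SUP M::int. real (card (B \<inter> {M..M + int N - 1})) / real N)"
  have le_1: "real (card (B \<inter> {M..M + int N - 1})) / real N \<le> 1" for M N
  proof (cases "N = 0")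
    case False
    have "card (B \<inter> {M..M + int N - 1}) \<le> card {M..M + int N - 1}" by (intro card_mono) auto
    with False show ?thesis by simp
  qed simp
  have bdd: "bdd_above (range (\<lambda>M. real (card (B \<inter> {M..M + int N - 1})) / real N))" for N
    by (rule bdd_aboveI[where M = 1]) (auto intro: le_1)
  have X_nonneg: "X N \<ge> 0" for N
    unfolding X_def by (rule cSUP_upper2[OF bdd, of 0]) auto
  have "X \<longlonglongrightarrow> 0"
  proof (rule LIMSEQ_I)
    fix r :: real assume "r > 0"
    then have "\<not> dense_on_long_intervals B (r / 2)" using not_dense by simp
    then obtain K
      where K: "\<And>a N. N \<ge> K \<Longrightarrow> real (card (B \<inter> {a..a + int N - 1})) < r / 2 * real N"
      unfolding dense_on_long_intervals_def by (meson not_le)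
    have "norm (X n - 0) < r" if n: "n \<ge> max K 1" for n
    proof -
      have "X n \<le> r / 2" unfolding X_def
      proof (rule cSUP_least)
        fix M :: int
        show "real (card (B \<inter> {M..M + int n - 1})) / real n \<le> r / 2"
          using K[of n M] n by (simp add: divide_simps)
      qed simp
      then show ?thesis using X_nonneg[of n] \<open>r > 0\<close> by simp
    qed
    then show "\<exists>n0. \<forall>n\<ge>n0. norm (X n - 0) < r" by blast
  qed
  then have "upper_banach_density B = 0"
    unfolding upper_banach_density_def X_def[symmetric] by (rule limI)
  with assms show False by simp
qed

lemma dense_on_long_intervals_residue_class:
  fixes L :: int
  assumes "L > 0" and dense: "dense_on_long_intervals B \<delta>"
  shows "\<exists>r. dense_on_long_intervals {b\<in>B. b mod L = r} (\<delta> / L)"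
proof (rule ccontr)
  let ?B = "\<lambda>r. {b\<in>B. b mod L = r}"
  assume "\<not> ?thesis"
  then have "\<forall>r. \<exists>K. \<forall>a N. N \<ge> K \<longrightarrow> real (card (?B r \<inter> {a..a + int N - 1})) < \<delta> / L * real N"
    unfolding dense_on_long_intervals_def by (meson not_le)
  then obtain K where K: "\<And>r a N. N \<ge> K r \<Longrightarrow> real (card (?B r \<inter> {a..a + int N - 1})) < \<delta> / L * real N"
    by metis
  obtain a N where N: "N \<ge> (\<Sum>r\<in>{0..<L}. K r)" and card_ge: "real (card (B \<inter> {a..a + int N - 1})) \<ge> \<delta> * real N"
    using dense unfolding dense_on_long_intervals_def by blast
  let ?I = "{a..a + int N - 1}"
  have "B \<inter> ?I = (\<Union>r\<in>{0..<L}. ?B r \<inter> ?I)" using \<open>L > 0\<close> by auto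
  then have "card (B \<inter> ?I) \<le> (\<Sum>r\<in>{0..<L}. card (?B r \<inter> ?I))"
    by (metis (no_types) card_UN_le finite_atLeastLessThan_int)
  then have "real (card (B \<inter> ?I)) \<le> (\<Sum>r\<in>{0..<L}. real (card (?B r \<inter> ?I)))"
    by (simp flip: of_nat_sum)
  also have "\<dots> < (\<Sum>r\<in>{0..<L}. \<delta> / L * real N)"
  proof (rule sum_strict_mono)
    fix r assume "r \<in> {0..<L}"
    then have "K r \<le> (\<Sum>r\<in>{0..<L}. K r)" by (intro member_le_sum) auto
    then have "K r \<le> N" using N by linarith
    then show "real (card (?B r \<inter> ?I)) < \<delta> / L * real N" by (rule K)
  qed (use \<open>L > 0\<close> in auto)
  also have "\<dots> = \<delta> * real N" using \<open>L > 0\<close> by simp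
  finally show False using card_ge by simp
qed

section \<open>The Furstenberg correspondence principle\<close>

lemma countable_bounded_seqs_convergent_subseq:
  fixes a :: "'q \<Rightarrow> nat \<Rightarrow> 'b::heine_borel"
  assumes "countable Q" and bounded: "\<And>q. q \<in> Q \<Longrightarrow> bounded (range (a q))"
  shows "\<exists>\<sigma>. strict_mono \<sigma> \<and> (\<forall>q\<in>Q. convergent (\<lambda>k. a q (\<sigma> k)))"
proof (cases "Q = {}")
  case True
  then show ?thesis by (auto intro: strict_mono_id)
next
  case False
  define q where "q = from_nat_into Q"
  have range_q: "range q = Q"
    unfolding q_def using range_from_nat_into[OF False \<open>countable Q\<close>] .
  define P where "P = (\<lambda>n (s::nat \<Rightarrow> nat). convergent (\<lambda>k. a (q n) (s k)))"
  interpret subseqs P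
  proof
    fix n and s :: "nat \<Rightarrow> nat"
    have "bounded (range (\<lambda>k. a (q n) (s k)))"
      using bounded[of "q n"] range_q by (auto intro: bounded_subset)
    then obtain l r where "strict_mono r" "((\<lambda>k. a (q n) (s k)) \<circ> r) \<longlonglongrightarrow> l"
      using bounded_imp_convergent_subsequence by blast
    then show "\<exists>r'. strict_mono r' \<and> P n (s \<circ> r')"
      unfolding P_def convergent_def by (auto simp: o_def)
  qed
  have P_diagseq: "P n (diagseq \<circ> (+) (Suc n))" for n
    by (rule diagseq_holds)
      (auto simp: P_def convergent_def o_def intro: LIMSEQ_subseq_LIMSEQ[unfolded o_def])
  have "convergent (\<lambda>k. a (q n) (diagseq k))" for n
  proof -
    have "convergent (\<lambda>k. a (q n) (diagseq (k + Suc n)))"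
      using P_diagseq[of n] by (simp add: P_def o_def add.commute)
    then show ?thesis using convergent_ignore_initial_segment by blast
  qed
  then show ?thesis using subseq_diagseq range_q by blast
qed

lemma measure_pmf_eq_sum:
  assumes "finite S" and "set_pmf p \<subseteq> S"
  shows "measure p X = (\<Sum>x\<in>S \<inter> X. pmf p x)"
proof -
  have "measure p X = measure p ((S \<inter> X) \<inter> set_pmf p)"
    using assms(2) measure_Int_set_pmf[of p X] by (metis Int_absorb1 Int_assoc Int_commute)
  also have "\<dots> = (\<Sum>x\<in>S \<inter> X. pmf p x)"
    using assms(1) by (simp add: measure_Int_set_pmf measure_measure_pmf_finite)
  finally show ?thesis .
qed

lemma card_interval_filter_eq:
  "card {m \<in> {a..a + int N - 1}. P m} = card {i \<in> {..<N}. P (a + int i)}"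
proof -
  have "{m \<in> {a..a + int N - 1}. P m} = (\<lambda>i. a + int i) ` {i \<in> {..<N}. P (a + int i)}"
  proof (intro equalityI subsetI)
    fix m assume "m \<in> {m \<in> {a..a + int N - 1}. P m}"
    then show "m \<in> (\<lambda>i. a + int i) ` {i \<in> {..<N}. P (a + int i)}"
      by (intro image_eqI[where x = "nat (m - a)"]) auto
  qed auto
  then show ?thesis by (simp add: card_image inj_on_def)
qed

text \<open>The two counts are sums over the same window of a sequence and its shift, so they telescope.\<close>
lemma card_interval_shift_diff_le_1:
  "\<bar>real (card {m \<in> {a..a + int N - 1}. P (m + 1)}) - real (card {m \<in> {a..a + int N - 1}. P m})\<bar> \<le> 1"
proof -
  define g where "g i = (of_bool (P (a + int i)) :: real)" for i
  have card_eq: "real (card {m \<in> {a..a + int N - 1}. Q m}) = (\<Sum>i<N. of_bool (Q (a + int i)))" for Q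
    unfolding card_interval_filter_eq by (simp add: Int_def)
  have "real (card {m \<in> {a..a + int N - 1}. P (m + 1)}) - real (card {m \<in> {a..a + int N - 1}. P m})
      = (\<Sum>i<N. g (Suc i) - g i)"
    unfolding card_eq[of "\<lambda>m. P (m + 1)"] card_eq[of P] by (simp add: g_def sum_subtractf ac_simps)
  also have "\<dots> = g N - g 0"
    by (rule sum_lessThan_telescope)
  finally show ?thesis by (simp add: g_def)
qed

definition cylinder :: "int set \<Rightarrow> (int \<Rightarrow> real set) \<Rightarrow> (int \<Rightarrow> real) set" where
  "cylinder J A = {\<omega>. \<forall>j\<in>J. \<omega> j \<in> A j}"

lemma cylinder_eq_prod_emb: "cylinder J A = prod_emb UNIV (\<lambda>_. borel) J (PiE J A)"
  by (auto simp: cylinder_def prod_emb_def PiE_def Pi_def)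

definition shift_by :: "int \<Rightarrow> (int \<Rightarrow> 'b) \<Rightarrow> int \<Rightarrow> 'b" where
  "shift_by z \<omega> = (\<lambda>j. \<omega> (j + z))"

lemma measurable_shift_by:
  "shift_by z \<in> PiM UNIV (\<lambda>_. borel) \<rightarrow>\<^sub>M PiM UNIV (\<lambda>_. borel::real measure)"
  unfolding shift_by_def by (rule measurable_PiM_single') (auto simp: space_PiM)

lemma space_PiM_UNIV_borel [simp]: "space (PiM (UNIV::int set) (\<lambda>_. borel::real measure)) = UNIV"
  by (simp add: space_PiM)

locale dense_windows =
  fixes C :: "int set" and \<delta> :: real and start :: "nat \<Rightarrow> int" and len :: "nat \<Rightarrow> nat"
  assumes len_ge: "\<And>i. len i \<ge> Suc i"
    and density: "\<And>i. real (card (C \<inter> {start i..start i + int (len i) - 1})) \<ge> \<delta> * real (len i)"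
    and \<delta>_pos: "\<delta> > 0"
begin

definition window :: "nat \<Rightarrow> int set" where
  "window i = {start i..start i + int (len i) - 1}"

lemma finite_window [simp]: "finite (window i)"
  and card_window: "card (window i) = len i"
  and window_nonempty [simp]: "window i \<noteq> {}"
  using len_ge[of i] by (auto simp: window_def)

definition pattern :: "int set \<Rightarrow> int \<Rightarrow> int \<Rightarrow> real" where
  "pattern J m = restrict (\<lambda>j. indicator C (m + j)) J"

definition patterns :: "int set \<Rightarrow> (int \<Rightarrow> real) set" where
  "patterns J = PiE J (\<lambda>_. {0, 1})"

lemma finite_patterns: "finite J \<Longrightarrow> finite (patterns J)"
  unfolding patterns_def by (auto intro: finite_PiE)

definition empirical :: "nat \<Rightarrow> int set \<Rightarrow> (int \<Rightarrow> real) pmf" where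
  "empirical i J = map_pmf (pattern J) (pmf_of_set (window i))"

lemma set_pmf_empirical: "set_pmf (empirical i J) \<subseteq> patterns J"
  by (auto simp: empirical_def patterns_def pattern_def indicator_def)

lemma empirical_restrict: "J \<subseteq> H \<Longrightarrow> empirical i J = map_pmf (\<lambda>f. restrict f J) (empirical i H)"
  unfolding empirical_def map_pmf_comp
  by (rule map_pmf_cong) (auto simp: pattern_def restrict_def fun_eq_iff)

definition frequency :: "nat \<Rightarrow> int set \<Rightarrow> (int \<Rightarrow> real set) \<Rightarrow> real" where
  "frequency i J A = real (card {m \<in> window i. \<forall>j\<in>J. indicator C (m + j) \<in> A j}) / real (len i)"

lemma measure_empirical: "measure (empirical i J) (Pi J A) = frequency i J A"
proof -
  have "{m \<in> window i. pattern J m \<in> Pi J A} = {m \<in> window i. \<forall>j\<in>J. indicator C (m + j) \<in> A j}"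
    by (auto simp: pattern_def Pi_def)
  then show ?thesis
    unfolding empirical_def measure_map_pmf frequency_def
    by (subst measure_pmf_of_set) (auto simp: card_window Int_def)
qed

definition sel :: "nat \<Rightarrow> nat" where
  "sel = (SOME s. strict_mono s \<and>
     (\<forall>(J, f)\<in>Sigma (Collect finite) patterns. convergent (\<lambda>k. pmf (empirical (s k) J) f)))"

lemma strict_mono_sel: "strict_mono sel"
  and convergent_pmf_empirical_sel:
    "finite J \<Longrightarrow> f \<in> patterns J \<Longrightarrow> convergent (\<lambda>k. pmf (empirical (sel k) J) f)"
proof -
  have "countable (Sigma (Collect finite) patterns)"
    by (intro countable_SIGMA countable_Collect_finite countable_finite finite_patterns) auto
  then have "\<exists>s. strict_mono s \<and>
      (\<forall>(J, f)\<in>Sigma (Collect finite) patterns. convergent (\<lambda>k. pmf (empirical (s k) J) f))"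
    using countable_bounded_seqs_convergent_subseq[of _ "\<lambda>(J, f) k. pmf (empirical k J) f"]
    by (force intro: boundedI[where B = 1] simp: pmf_le_1)
  then have "strict_mono sel \<and>
      (\<forall>(J, f)\<in>Sigma (Collect finite) patterns. convergent (\<lambda>k. pmf (empirical (sel k) J) f))"
    unfolding sel_def by (rule someI_ex)
  then show "strict_mono sel" "finite J \<Longrightarrow> f \<in> patterns J \<Longrightarrow> convergent (\<lambda>k. pmf (empirical (sel k) J) f)"
    by auto
qed

lemma len_sel: "real (len (sel k)) \<ge> real (Suc k)"
  using seq_suble[OF strict_mono_sel, of k] len_ge[of "sel k"] by simp

definition weight :: "int set \<Rightarrow> (int \<Rightarrow> real) \<Rightarrow> real" where
  "weight J f = lim (\<lambda>k. pmf (empirical (sel k) J) f)"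

lemma pmf_empirical_outside: "f \<notin> patterns J \<Longrightarrow> pmf (empirical i J) f = 0"
  using set_pmf_empirical by (meson pmf_eq_0_set_pmf subsetD)

lemma pmf_empirical_tendsto_weight:
  assumes "finite J" shows "(\<lambda>k. pmf (empirical (sel k) J) f) \<longlonglongrightarrow> weight J f"
proof (cases "f \<in> patterns J")
  case True
  then show ?thesis
    using convergent_pmf_empirical_sel[OF assms] unfolding weight_def by (simp add: convergent_LIMSEQ_iff)
next
  case False
  then show ?thesis unfolding weight_def by (simp add: pmf_empirical_outside limI)
qed

lemma weight_outside: "f \<notin> patterns J \<Longrightarrow> weight J f = 0"
  unfolding weight_def by (simp add: pmf_empirical_outside limI)

lemma weight_nonneg: "finite J \<Longrightarrow> weight J f \<ge> 0"
  using pmf_empirical_tendsto_weight by (rule LIMSEQ_le_const) auto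

lemma measure_empirical_tendsto:
  "finite J \<Longrightarrow> (\<lambda>k. measure (empirical (sel k) J) X) \<longlonglongrightarrow> (\<Sum>f\<in>patterns J \<inter> X. weight J f)"
  by (simp add: measure_pmf_eq_sum[OF finite_patterns set_pmf_empirical])
    (intro tendsto_sum pmf_empirical_tendsto_weight)

definition limit_pmf :: "int set \<Rightarrow> (int \<Rightarrow> real) pmf" where
  "limit_pmf J = embed_pmf (weight J)"

lemma pmf_limit_pmf: assumes J: "finite J" shows "pmf (limit_pmf J) f = weight J f"
  unfolding limit_pmf_def
proof (rule pmf_embed_pmf)
  show "0 \<le> weight J x" for x using weight_nonneg[OF J] .
  have "(\<Sum>f\<in>patterns J. weight J f) = 1"
    using measure_empirical_tendsto[OF J, of UNIV] by (simp add: LIMSEQ_const_iff)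
  moreover have "(\<integral>\<^sup>+ x. ennreal (weight J x) \<partial>count_space UNIV) = (\<Sum>x\<in>patterns J. ennreal (weight J x))"
    by (rule nn_integral_count_space') (auto simp: finite_patterns J weight_outside)
  ultimately show "(\<integral>\<^sup>+ x. ennreal (weight J x) \<partial>count_space UNIV) = 1"
    using weight_nonneg[OF J] by (simp add: sum_ennreal)
qed

lemma measure_empirical_tendsto_limit_pmf:
  assumes J: "finite J" shows "(\<lambda>k. measure (empirical (sel k) J) X) \<longlonglongrightarrow> measure (limit_pmf J) X"
proof -
  have "set_pmf (limit_pmf J) \<subseteq> patterns J"
    using weight_outside by (auto simp: set_pmf_eq pmf_limit_pmf J)
  then show ?thesis
    using measure_empirical_tendsto[OF J, of X]
    by (simp add: measure_pmf_eq_sum[OF finite_patterns[OF J]] pmf_limit_pmf J)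
qed

lemma limit_pmf_restrict:
  assumes "J \<subseteq> H" "finite H" shows "limit_pmf J = map_pmf (\<lambda>f. restrict f J) (limit_pmf H)"
proof (rule pmf_eqI)
  fix f
  have "finite J" using assms finite_subset by blast
  then have "(\<lambda>k. pmf (empirical (sel k) J) f) \<longlonglongrightarrow> pmf (limit_pmf J) f"
    using pmf_empirical_tendsto_weight by (simp add: pmf_limit_pmf)
  moreover have "(\<lambda>k. pmf (empirical (sel k) J) f) \<longlonglongrightarrow> pmf (map_pmf (\<lambda>f. restrict f J) (limit_pmf H)) f"
    unfolding empirical_restrict[OF assms(1)] pmf_map by (rule measure_empirical_tendsto_limit_pmf[OF assms(2)])
  ultimately show "pmf (limit_pmf J) f = pmf (map_pmf (\<lambda>f. restrict f J) (limit_pmf H)) f"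
    by (rule LIMSEQ_unique)
qed

definition marginal :: "int set \<Rightarrow> (int \<Rightarrow> real) measure" where
  "marginal J = distr (limit_pmf J) (PiM J (\<lambda>_. borel)) (\<lambda>f. restrict f J)"

lemma measurable_restrict_pmf: "(\<lambda>f. restrict f J) \<in> measure_pmf p \<rightarrow>\<^sub>M PiM J (\<lambda>_. borel::real measure)"
  by (auto simp: measurable_pmf_measure1 space_PiM)

lemma marginal_restrict:
  assumes "J \<subseteq> H" "finite H"
  shows "marginal J = distr (marginal H) (PiM J (\<lambda>_. borel)) (\<lambda>f. restrict f J)"
proof -
  have "distr (marginal H) (PiM J (\<lambda>_. borel)) (\<lambda>f. restrict f J)
      = distr (limit_pmf H) (PiM J (\<lambda>_. borel)) ((\<lambda>f. restrict f J) \<circ> (\<lambda>f. restrict f H))"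
    unfolding marginal_def
    by (rule distr_distr[OF measurable_restrict_subset[OF assms(1)] measurable_restrict_pmf])
  also have "(\<lambda>f. restrict f J) \<circ> (\<lambda>f. restrict f H) = (\<lambda>f. restrict f J) \<circ> (\<lambda>f. restrict f J)"
    using assms(1) by (auto simp: fun_eq_iff restrict_def)
  also have "distr (limit_pmf H) (PiM J (\<lambda>_. borel)) \<dots>
      = distr (distr (limit_pmf H) (count_space UNIV) (\<lambda>f. restrict f J)) (PiM J (\<lambda>_. borel)) (\<lambda>f. restrict f J)"
    by (rule distr_distr[symmetric]) (auto simp: measurable_count_space_eq1 space_PiM measurable_pmf_measure1)
  also have "\<dots> = marginal J"
    unfolding marginal_def limit_pmf_restrict[OF assms] map_pmf_rep_eq ..
  finally show ?thesis ..
qed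

lemma prob_space_marginal: "prob_space (marginal J)"
  unfolding marginal_def by (intro prob_space.prob_space_distr prob_space_measure_pmf measurable_restrict_pmf)

sublocale X: polish_projective UNIV marginal
  unfolding polish_projective_def projective_family_def
  using marginal_restrict prob_space_marginal by blast

lemma sets_cylinder: "finite J \<Longrightarrow> (\<And>j. j \<in> J \<Longrightarrow> A j \<in> sets borel) \<Longrightarrow> cylinder J A \<in> sets X.lim"
  unfolding cylinder_eq_prod_emb by (auto intro!: measurable_prod_emb sets_PiM_I_finite)

lemma frequency_tendsto_cylinder:
  assumes J: "finite J" and A: "\<And>j. j \<in> J \<Longrightarrow> A j \<in> sets borel"
  shows "(\<lambda>k. frequency (sel k) J A) \<longlonglongrightarrow> measure X.lim (cylinder J A)"
proof -
  have "measure X.lim (cylinder J A) = measure (marginal J) (PiE J A)"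
    unfolding cylinder_eq_prod_emb by (rule X.measure_lim_emb) (auto intro!: sets_PiM_I_finite J A)
  also have "\<dots> = measure (limit_pmf J) ((\<lambda>f. restrict f J) -` PiE J A)"
    unfolding marginal_def using J A by (simp add: measure_distr[OF measurable_restrict_pmf] sets_PiM_I_finite)
  also have "(\<lambda>f. restrict f J) -` PiE J A = Pi J A"
    by (auto simp: PiE_def Pi_def extensional_def)
  finally show ?thesis
    using measure_empirical_tendsto_limit_pmf[OF J, of "Pi J A"] by (simp add: measure_empirical)
qed

lemma frequency_shift_close:
  "\<bar>frequency i ((\<lambda>j. j + 1) ` J) (\<lambda>j. A (j - 1)) - frequency i J A\<bar> \<le> 1 / real (len i)"
proof -
  let ?P = "\<lambda>m. \<forall>j\<in>J. indicator C (m + j) \<in> A j"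
  have "frequency i ((\<lambda>j. j + 1) ` J) (\<lambda>j. A (j - 1)) = real (card {m \<in> window i. ?P (m + 1)}) / real (len i)"
    by (simp add: frequency_def ac_simps)
  then have "frequency i ((\<lambda>j. j + 1) ` J) (\<lambda>j. A (j - 1)) - frequency i J A
      = (real (card {m \<in> window i. ?P (m + 1)}) - real (card {m \<in> window i. ?P m})) / real (len i)"
    by (simp add: frequency_def diff_divide_distrib)
  also have "\<bar>\<dots>\<bar> \<le> 1 / real (len i)"
    using card_interval_shift_diff_le_1[where P = ?P] by (auto simp: abs_divide window_def intro: divide_right_mono)
  finally show ?thesis .
qed

lemma shift_invariant_lim: "distr X.lim X.lim (shift_by 1) = X.lim"
proof (rule measure_eqI_PiM_infinite[where I = UNIV and M = "\<lambda>_. borel"])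
  have meas: "shift_by 1 \<in> X.lim \<rightarrow>\<^sub>M X.lim"
    using measurable_shift_by by (simp add: measurable_def)
  then show "finite_measure (distr X.lim X.lim (shift_by 1))"
    by (intro prob_space.finite_measure X.P.prob_space_distr)
  fix A and J :: "int set"
  assume J: "finite J" and "J \<subseteq> UNIV" and A: "\<And>i. i \<in> J \<Longrightarrow> A i \<in> sets (borel::real measure)"
  define J' where "J' = (\<lambda>j. j + 1) ` J"
  define A' where "A' = (\<lambda>j. A (j - 1))"
  have "finite J'" "\<And>j. j \<in> J' \<Longrightarrow> A' j \<in> sets borel"
    using J A by (auto simp: J'_def A'_def)
  then have lim': "(\<lambda>k. frequency (sel k) J' A') \<longlonglongrightarrow> measure X.lim (cylinder J' A')"
    by (rule frequency_tendsto_cylinder)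
  have "(\<lambda>k. frequency (sel k) J' A' - frequency (sel k) J A) \<longlonglongrightarrow> 0"
  proof (rule Lim_null_comparison[OF always_eventually LIMSEQ_inverse_real_of_nat], intro allI)
    fix k
    have "1 / real (len (sel k)) \<le> inverse (real (Suc k))"
      using len_sel[of k] by (simp add: divide_simps)
    then show "norm (frequency (sel k) J' A' - frequency (sel k) J A) \<le> inverse (real (Suc k))"
      using frequency_shift_close[of "sel k" J A] by (simp add: J'_def A'_def)
  qed
  moreover have "(\<lambda>k. frequency (sel k) J A) \<longlonglongrightarrow> measure X.lim (cylinder J A)"
    using J A by (rule frequency_tendsto_cylinder)
  ultimately have "measure X.lim (cylinder J' A') = measure X.lim (cylinder J A)"
    using LIMSEQ_unique tendsto_diff[OF lim'] by fastforce
  moreover have "shift_by 1 -` cylinder J A \<inter> space X.lim = cylinder J' A'"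
    by (auto simp: shift_by_def cylinder_def J'_def A'_def)
  ultimately show "emeasure (distr X.lim X.lim (shift_by 1)) (prod_emb UNIV (\<lambda>_. borel) J (PiE J A))
      = emeasure X.lim (prod_emb UNIV (\<lambda>_. borel) J (PiE J A))"
    using sets_cylinder[OF J A] by (simp add: emeasure_distr[OF meas] X.P.emeasure_eq_measure flip: cylinder_eq_prod_emb)
qed simp_all

lemma measure_cylinder_0: "measure X.lim (cylinder {0} (\<lambda>_. {1})) \<ge> \<delta>"
proof -
  have "\<delta> \<le> frequency (sel k) {0} (\<lambda>_. {1})" for k
  proof -
    have "{m \<in> window (sel k). \<forall>j\<in>{0}. indicator C (m + j) \<in> {1::real}} = C \<inter> window (sel k)"
      by (auto simp: indicator_def)
    then show ?thesis
      using density[of "sel k"] len_sel[of k] by (simp add: frequency_def window_def field_simps Int_commute)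
  qed
  moreover have "(\<lambda>k. frequency (sel k) {0} (\<lambda>_. {1})) \<longlonglongrightarrow> measure X.lim (cylinder {0} (\<lambda>_. {1}))"
    by (rule frequency_tendsto_cylinder) auto
  ultimately show ?thesis
    by (intro LIMSEQ_le_const) auto
qed

lemma measure_cylinder_pos_imp_difference:
  assumes "measure X.lim (cylinder {0, - n} (\<lambda>_. {1})) > 0" shows "\<exists>a\<in>C. \<exists>b\<in>C. n = a - b"
proof (rule ccontr)
  assume no_diff: "\<not> ?thesis"
  have "frequency (sel k) {0, - n} (\<lambda>_. {1}) = 0" for k
  proof -
    have "m \<in> C \<Longrightarrow> m - n \<in> C \<Longrightarrow> False" for m
      using no_diff by force
    then have "{m \<in> window (sel k). \<forall>j\<in>{0, - n}. indicator C (m + j) \<in> {1::real}} = {}"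
      by (auto simp: indicator_def split: if_splits)
    then show ?thesis by (simp add: frequency_def)
  qed
  then have "measure X.lim (cylinder {0, - n} (\<lambda>_. {1})) = 0"
    using frequency_tendsto_cylinder[of "{0, - n}" "\<lambda>_. {1}"] by (simp add: LIMSEQ_const_iff)
  with assms show False by simp
qed

end

subsection \<open>A shift-invariant measure on \<open>\<real>\<^sup>\<int>\<close> yields a system on the reals\<close>

text \<open>Sets of recurrence quantify over systems on \<^typ>\<open>real\<close> only. A path is transported to
  \<^typ>\<open>real\<close> through its set of positions with value \<open>1\<close>, coded as a set of naturals;
  this loses nothing about the events \<open>{\<omega>. \<omega> j = 1}\<close>, which is all that is needed.\<close>

definition encode_set :: "nat set \<Rightarrow> real" where
  "encode_set = (SOME f. bij_betw f UNIV UNIV)"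

definition decode_set :: "real \<Rightarrow> nat set" where
  "decode_set = inv encode_set"

lemma bij_encode_set: "bij_betw encode_set UNIV UNIV"
  unfolding encode_set_def using nat_sets_eqpoll_reals unfolding eqpoll_def by (rule someI_ex)

lemma encode_decode_set [simp]: "encode_set (decode_set y) = y"
  and decode_encode_set [simp]: "decode_set (encode_set X) = X"
  using bij_encode_set unfolding decode_set_def bij_betw_def by (auto simp: surj_f_inv_f inv_f_f)

definition encode_path :: "(int \<Rightarrow> real) \<Rightarrow> real" where
  "encode_path \<omega> = encode_set {n. \<omega> (int_decode n) = 1}"

definition real_shift_by :: "int \<Rightarrow> real \<Rightarrow> real" where
  "real_shift_by z y = encode_set {n. int_encode (int_decode n + z) \<in> decode_set y}"

lemma real_shift_by_encode_path: "real_shift_by z (encode_path \<omega>) = encode_path (shift_by z \<omega>)"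
  by (simp add: real_shift_by_def encode_path_def shift_by_def)

lemma real_shift_by_0 [simp]: "real_shift_by 0 y = y"
  by (simp add: real_shift_by_def)

lemma real_shift_by_add: "real_shift_by m (real_shift_by n y) = real_shift_by (m + n) y"
  by (simp add: real_shift_by_def ac_simps)

lemma image_real_shift_by: "real_shift_by n ` A = real_shift_by (- n) -` A"
proof (intro equalityI subsetI)
  fix y assume "y \<in> real_shift_by (- n) -` A"
  then have "real_shift_by n (real_shift_by (- n) y) \<in> real_shift_by n ` A" by blast
  then show "y \<in> real_shift_by n ` A" by (simp add: real_shift_by_add)
qed (auto simp: real_shift_by_add)

locale shift_invariant_process =
  fixes Q :: "(int \<Rightarrow> real) measure"
  assumes prob_Q: "prob_space Q"
    and sets_Q: "sets Q = sets (PiM UNIV (\<lambda>_. borel))"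
    and shift_invariant: "distr Q Q (shift_by 1) = Q"
begin

interpretation Q: prob_space Q by (rule prob_Q)

lemma space_Q [simp]: "space Q = UNIV"
  using sets_eq_imp_space_eq[OF sets_Q] by simp

lemma measurable_shift_by_Q: "shift_by z \<in> Q \<rightarrow>\<^sub>M Q"
  using measurable_shift_by by (simp add: measurable_cong_sets[OF sets_Q sets_Q])

definition real_events :: "real set set" where
  "real_events = {A. encode_path -` A \<in> sets Q}"

lemma sigma_algebra_real_events: "sigma_algebra UNIV real_events"
  unfolding sigma_algebra_iff2
proof (intro conjI allI ballI impI)
  fix A assume "A \<in> real_events"
  then show "UNIV - A \<in> real_events"
    using sets.compl_sets[of "encode_path -` A" Q] by (simp add: real_events_def vimage_Diff)
next
  fix A :: "nat \<Rightarrow> real set" assume "range A \<subseteq> real_events"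
  then show "(\<Union>i. A i) \<in> real_events" by (auto simp: real_events_def vimage_UN)
qed (auto simp: real_events_def)

definition real_model :: "real measure" where
  "real_model = distr Q (sigma UNIV real_events) encode_path"

lemma sets_sigma_real_events: "sets (sigma UNIV real_events) = real_events"
  using sigma_algebra_real_events by (simp add: sigma_algebra.sigma_sets_eq)

lemma sets_real_model: "sets real_model = real_events"
  and space_real_model [simp]: "space real_model = UNIV"
  by (simp_all add: real_model_def sets_sigma_real_events)

lemma measurable_encode_path: "encode_path \<in> Q \<rightarrow>\<^sub>M sigma UNIV real_events"
  by (rule measurableI) (simp_all only: sets_sigma_real_events, auto simp: real_events_def)

lemma measure_real_model: "A \<in> real_events \<Longrightarrow> measure real_model A = measure Q (encode_path -` A)"
  unfolding real_model_def
  by (subst measure_distr[OF measurable_encode_path]) (simp_all add: sets_sigma_real_events)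

lemma measurable_real_shift_by: "real_shift_by z \<in> real_model \<rightarrow>\<^sub>M real_model"
proof (rule measurableI)
  fix A assume "A \<in> sets real_model"
  then have "encode_path -` A \<in> sets Q" by (simp add: sets_real_model real_events_def)
  moreover have "encode_path -` (real_shift_by z -` A) = shift_by z -` (encode_path -` A)"
    by (auto simp: real_shift_by_encode_path)
  ultimately show "real_shift_by z -` A \<inter> space real_model \<in> sets real_model"
    using measurable_sets[OF measurable_shift_by_Q] by (simp add: sets_real_model real_events_def)
qed simp

lemma bij_real_shift_by: "bij_betw (real_shift_by z) UNIV UNIV"
  by (rule bij_betw_byWitness[where f' = "real_shift_by (- z)"]) (auto simp: real_shift_by_add)

lemma the_inv_real_shift_by: "the_inv_into UNIV (real_shift_by z) = real_shift_by (- z)"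
proof
  fix y show "the_inv_into UNIV (real_shift_by z) y = real_shift_by (- z) y"
    using bij_real_shift_by by (intro the_inv_into_f_eq) (auto simp: bij_betw_def real_shift_by_add)
qed

lemma mps_real_model: "mps real_model (real_shift_by 1)"
  unfolding mps_def
proof (intro conjI ballI)
  show "prob_space real_model"
    unfolding real_model_def by (rule Q.prob_space_distr[OF measurable_encode_path])
  show "the_inv_into (space real_model) (real_shift_by 1) \<in> real_model \<rightarrow>\<^sub>M real_model"
    using measurable_real_shift_by by (simp add: the_inv_real_shift_by)
  fix A assume "A \<in> sets real_model"
  then have A: "A \<in> real_events" and "real_shift_by 1 -` A \<in> real_events"
    using measurable_sets[OF measurable_real_shift_by] by (auto simp: sets_real_model)
  moreover have "encode_path -` (real_shift_by 1 -` A) = shift_by 1 -` (encode_path -` A) \<inter> space Q"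
    by (auto simp: real_shift_by_encode_path)
  ultimately have "measure real_model (real_shift_by 1 -` A \<inter> space real_model)
      = measure (distr Q Q (shift_by 1)) (encode_path -` A)"
    by (simp add: measure_real_model measure_distr[OF measurable_shift_by_Q] real_events_def)
  also have "\<dots> = measure real_model A"
    by (simp add: shift_invariant measure_real_model A)
  finally show "measure real_model (real_shift_by 1 -` A \<inter> space real_model) = measure real_model A" .
qed (use bij_real_shift_by measurable_real_shift_by in simp_all)

lemma tpow_real_model: "tpow real_model (real_shift_by 1) n = real_shift_by n"
proof -
  have "(real_shift_by z ^^ k) = real_shift_by (int k * z)" for z k
    by (induction k) (auto simp: real_shift_by_add algebra_simps)
  then show ?thesis by (simp add: tpow_def the_inv_real_shift_by fun_eq_iff)
qed

lemma real_model_returns: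
  "\<exists>(N::real measure) R E. mps N R \<and> E \<in> sets N \<and>
     (\<forall>n. measure N (E \<inter> tpow N R n ` E) = measure Q (cylinder {0, - n} (\<lambda>_. {1})))"
proof (intro exI conjI allI)
  define E where "E = {y. int_encode 0 \<in> decode_set y}"
  have "encode_path -` (E \<inter> real_shift_by n ` E) = cylinder {0, - n} (\<lambda>_. {1})" for n
    by (auto simp: E_def cylinder_def image_real_shift_by real_shift_by_encode_path)
      (auto simp: encode_path_def shift_by_def)
  moreover have "cylinder {0, - n} (\<lambda>_. {1}) \<in> sets Q" for n
    unfolding sets_Q cylinder_eq_prod_emb by (intro measurable_prod_emb sets_PiM_I_finite) auto
  ultimately have returns: "E \<inter> real_shift_by n ` E \<in> real_events"
    and "measure real_model (E \<inter> real_shift_by n ` E) = measure Q (cylinder {0, - n} (\<lambda>_. {1}))" for n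
    by (simp_all add: real_events_def measure_real_model)
  then show "measure real_model (E \<inter> tpow real_model (real_shift_by 1) n ` E)
      = measure Q (cylinder {0, - n} (\<lambda>_. {1}))" for n
    by (simp add: tpow_real_model)
  show "E \<in> sets real_model"
    using returns[of 0] by (simp add: sets_real_model)
qed (rule mps_real_model)

end

lemma furstenberg_correspondence:
  assumes "\<delta> > 0" and "dense_on_long_intervals C \<delta>"
  shows "\<exists>(N::real measure) R E. mps N R \<and> E \<in> sets N \<and> measure N E > 0 \<and>
     (\<forall>n. measure N (E \<inter> tpow N R n ` E) > 0 \<longrightarrow> (\<exists>a\<in>C. \<exists>b\<in>C. n = a - b))"
proof -
  have "\<forall>i. \<exists>w. snd w \<ge> Suc i \<and> real (card (C \<inter> {fst w..fst w + int (snd w) - 1})) \<ge> \<delta> * real (snd w)"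
    using assms(2) unfolding dense_on_long_intervals_def by fastforce
  then obtain w where "\<And>i. snd (w i) \<ge> Suc i"
    and "\<And>i. real (card (C \<inter> {fst (w i)..fst (w i) + int (snd (w i)) - 1})) \<ge> \<delta> * real (snd (w i))"
    by metis
  then interpret dense_windows C \<delta> "fst \<circ> w" "snd \<circ> w"
    using assms(1) by unfold_locales auto
  interpret shift_invariant_process X.lim
    by unfold_locales (simp_all add: X.P.prob_space_axioms shift_invariant_lim)
  obtain N :: "real measure" and R E where "mps N R" "E \<in> sets N"
    and returns: "\<And>n. measure N (E \<inter> tpow N R n ` E) = measure X.lim (cylinder {0, - n} (\<lambda>_. {1}))"
    using real_model_returns by blast
  moreover have "measure N E > 0"
    using returns[of 0] measure_cylinder_0 \<delta>_pos by simp
  ultimately show ?thesis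
    using measure_cylinder_pos_imp_difference by (intro exI[of _ N] exI[of _ R] exI[of _ E]) auto
qed

section \<open>Rigidity versus recurrence\<close>

lemma shift_escapes_infinite_set:
  fixes S F :: "int set"
  assumes "infinite S" and "finite F"
    and no_diff: "\<And>s s'. s \<in> S - F \<Longrightarrow> s' \<in> S - F \<Longrightarrow> s - s' \<noteq> z"
  shows "\<exists>s'\<in>S - F. s' + z \<notin> S"
proof (rule ccontr)
  assume "\<not> ?thesis"
  then have shifted_in_S: "(\<lambda>s'. s' + z) ` (S - F) \<subseteq> S" by auto
  have "infinite ((\<lambda>s'. s' + z) ` (S - F))"
    using assms(1,2) by (subst finite_image_iff) (auto simp: inj_on_def)
  then have "\<not> (\<lambda>s'. s' + z) ` (S - F) \<subseteq> F"
    using \<open>finite F\<close> finite_subset by blast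
  then obtain s' where "s' \<in> S - F" "s' + z \<notin> F" by blast
  with shifted_in_S no_diff[of "s' + z" s'] show False by auto
qed

text \<open>Passing to a residue class of \<open>B\<close> modulo \<open>L > \<bar>s + k\<bar>\<close> (\<open>s \<in> F\<close>) makes every
  difference that lands in \<open>F + k\<close> vanish, and \<open>0\<close> is excluded since \<open>- k \<notin> S\<close>.\<close>
lemma recurrence_meets_difference_set:
  fixes S F B :: "int set"
  assumes "finite F" and "- k \<notin> S" and recurrence: "set_of_recurrence ((\<lambda>s. s + k) ` S)"
    and "upper_banach_density B > 0"
  shows "\<exists>s\<in>S - F. \<exists>a\<in>B. \<exists>b\<in>B. s + k = a - b"
proof -
  define L where "L = 1 + (\<Sum>s\<in>F. \<bar>s + k\<bar>)"
  have "(\<Sum>s\<in>F. \<bar>s + k\<bar>) \<ge> 0" by (rule sum_nonneg) simp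
  then have "L > 0" unfolding L_def by linarith
  have L_gt: "\<bar>s + k\<bar> < L" if "s \<in> F" for s
    using member_le_sum[OF that, of "\<lambda>s. \<bar>s + k\<bar>"] \<open>finite F\<close> by (simp add: L_def)
  obtain \<delta> where "\<delta> > 0" and "dense_on_long_intervals B \<delta>"
    using upper_banach_density_pos_imp_dense assms(4) by blast
  then obtain r where dense_r: "dense_on_long_intervals {b\<in>B. b mod L = r} (\<delta> / L)"
    using dense_on_long_intervals_residue_class \<open>L > 0\<close> by blast
  have "\<delta> / L > 0" using \<open>\<delta> > 0\<close> \<open>L > 0\<close> by simp
  from furstenberg_correspondence[OF this dense_r]
  obtain N :: "real measure" and R E where "mps N R" "E \<in> sets N" "measure N E > 0"
    and returns: "\<forall>n. measure N (E \<inter> tpow N R n ` E) > 0 \<longrightarrow>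
      (\<exists>a\<in>{b\<in>B. b mod L = r}. \<exists>b\<in>{b\<in>B. b mod L = r}. n = a - b)"
    by blast
  then have "\<exists>n\<in>(\<lambda>s. s + k) ` S. measure N (E \<inter> tpow N R n ` E) > 0"
    using recurrence unfolding set_of_recurrence_def by blast
  then obtain s where "s \<in> S" and "measure N (E \<inter> tpow N R (s + k) ` E) > 0"
    by blast
  then obtain a b where a: "a \<in> B" "a mod L = r" and b: "b \<in> B" "b mod L = r" and "s + k = a - b"
    using returns by blast
  moreover have "s \<notin> F"
  proof
    assume "s \<in> F"
    have "L dvd a - b" using a(2) b(2) mod_eq_dvd_iff[of a L b] by simp
    then have "L dvd s + k" using \<open>s + k = a - b\<close> by simp
    have "s + k = 0"
    proof (rule ccontr)
      assume "s + k \<noteq> 0"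
      with \<open>L dvd s + k\<close> have "\<bar>L\<bar> \<le> \<bar>s + k\<bar>" by (rule dvd_imp_le_int[rotated])
      with L_gt[OF \<open>s \<in> F\<close>] show False by simp
    qed
    then have "s = - k" by simp
    with \<open>s \<in> S\<close> \<open>- k \<notin> S\<close> show False by simp
  qed
  ultimately show ?thesis using \<open>s \<in> S\<close> by blast
qed

theorem proposition4p2:
  fixes M :: "'a measure" and T :: "'a \<Rightarrow> 'a"
  assumes "rigid_recurrence M T" and "nontrivial_system M"
  shows "\<forall>D\<in>sets M. D \<inter> T ` D = {} \<longrightarrow> (\<forall>c>0.
           \<not> (\<exists>n0::int. \<exists>B::int set. upper_banach_density B > 0 \<and>
                 {n0 + a - b | a b. a \<in> B \<and> b \<in> B} \<subseteq> return_set M T D c))"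
proof (intro ballI impI allI notI)
  obtain S where "mps M T" and rigid: "set_of_rigidity M T S"
    and recurrence: "\<And>n. set_of_recurrence ((\<lambda>s. s + n) ` S)"
    using assms(1) unfolding rigid_recurrence_def by blast
  interpret mp_system M T by unfold_locales fact
  fix D c assume D: "D \<in> sets M" and disj: "D \<inter> T ` D = {}" and "(c::real) > 0"
    and "\<exists>n0::int. \<exists>B::int set. upper_banach_density B > 0 \<and>
      {n0 + a - b | a b. a \<in> B \<and> b \<in> B} \<subseteq> return_set M T D c"
  then obtain n0 and B :: "int set" where dense: "upper_banach_density B > 0"
    and returns: "\<And>a b. a \<in> B \<Longrightarrow> b \<in> B \<Longrightarrow> n0 + a - b \<in> return_set M T D c"
    by blast
  obtain F where "finite F" and avoid: "\<And>s s'. s \<in> S - F \<Longrightarrow> s' \<in> S - F \<Longrightarrow> s - s' + 1 \<notin> return_set M T D c"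
    using rigidity_set_differences_avoid_return_set[OF D disj rigid \<open>c > 0\<close>] by blast
  have "upper_banach_density {} = 0" by (simp add: upper_banach_density_def)
  with dense obtain b0 where "b0 \<in> B" by force
  then have "s - s' \<noteq> n0 - 1" if "s \<in> S - F" "s' \<in> S - F" for s s'
    using avoid[OF that] returns[of b0 b0] by force
  then obtain s' where "s' \<in> S - F" and "s' + (n0 - 1) \<notin> S"
    using shift_escapes_infinite_set rigid \<open>finite F\<close> unfolding set_of_rigidity_def by blast
  define k where "k = - (s' + (n0 - 1))"
  have "- k \<notin> S" using \<open>s' + (n0 - 1) \<notin> S\<close> unfolding k_def minus_minus .
  then obtain s a b where "s \<in> S - F" "a \<in> B" "b \<in> B" and "s + k = a - b"
    using recurrence_meets_difference_set[OF \<open>finite F\<close> _ recurrence dense] by blast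
  then have "n0 + a - b = s - s' + 1" by (simp add: k_def)
  then show False using returns[OF \<open>a \<in> B\<close> \<open>b \<in> B\<close>] avoid[OF \<open>s \<in> S - F\<close> \<open>s' \<in> S - F\<close>] by simp
qed

end
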